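(* Let $T$ be an equilateral hyperbolic triangle with side length $a$ and angle $\alpha$, and suppose that either $e^a\in\mathbb{Q}$ or $e^{i\alpha}\in\mathbb{Q}[i]$. Let $\ell$ be the length of a median of $T$ (the geodesic segment from a vertex to the midpoint of the opposite side, which for an equilateral triangle coincides with the area bisector from that vertex). Then $e^\ell\notin\mathbb{Q}$.
   Context: Triangles are non-degenerate, bounded triangles in the hyperbolic plane (curvature $-1$). An area bisector from a vertex is the geodesic segment from that vertex to the opposite side dividing the triangle into two triangles of equal area. *)

theory Defs
  imports "HOL-Analysis.Analysis"
begin

text \<open>Hyperboloid model of the hyperbolic plane (curvature -1):
  points p = (x0,x1,x2) with x0^2 - x1^2 - x2^2 = 1 and x0 > 0.\<close>

type_synonym pt = "real \<times> real \<times> real"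

definition lor :: "pt \<Rightarrow> pt \<Rightarrow> real" where
  "lor p q = fst p * fst q - fst (snd p) * fst (snd q) - snd (snd p) * snd (snd q)"

definition hpoint :: "pt \<Rightarrow> bool" where
  "hpoint p \<longleftrightarrow> lor p p = 1 \<and> fst p > 0"

definition hdist :: "pt \<Rightarrow> pt \<Rightarrow> real" where
  "hdist p q = arcosh (lor p q)"

text \<open>Unit-speed-independent tangent vector at P pointing along the geodesic towards Q.\<close>
definition tangent_towards :: "pt \<Rightarrow> pt \<Rightarrow> pt" where
  "tangent_towards P Q = Q - scaleR (lor P Q) P"

text \<open>Angle at vertex Q between geodesics QP and QR (the Riemannian angle;
  -lor is positive definite on the tangent space).\<close>
definition hangle :: "pt \<Rightarrow> pt \<Rightarrow> pt \<Rightarrow> real" where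
  "hangle P Q R =
     (let u = tangent_towards Q P; v = tangent_towards Q R in
      arccos (- lor u v / (sqrt (- lor u u) * sqrt (- lor v v))))"

definition hmidpoint :: "pt \<Rightarrow> pt \<Rightarrow> pt \<Rightarrow> bool" where
  "hmidpoint B C M \<longleftrightarrow> hpoint M \<and> hdist B M = hdist B C / 2 \<and> hdist M C = hdist B C / 2"

text \<open>Three points lie on a common geodesic iff they are linearly dependent in R^3.\<close>
definition hcollinear :: "pt \<Rightarrow> pt \<Rightarrow> pt \<Rightarrow> bool" where
  "hcollinear A B C \<longleftrightarrow> (\<exists>x y z. (x,y,z) \<noteq> (0,0,0) \<and> scaleR x A + scaleR y B + scaleR z C = 0)"

end

theory Submission
  imports Defs "HOL-Computational_Algebra.Computational_Algebra"
begin

(* Write c = cosh a and u = cosh (a/2), so that c = 2 u^2 - 1. In the hyperboloid model the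
   midpoint of BC is (B + C) / (2 u), hence the median l satisfies cosh l = c / u, which amounts
   to (u sinh l)^2 = (4 u^2 - 1) (u^2 - 1). If e^l were rational, so would be cosh l and sinh l.
   Each hypothesis makes c rational (in the second case because cos alpha = c / (c + 1)), hence
   also u = c / cosh l, and it makes one of u^2 (u^2 - 1) = (sinh a / 2)^2 and
   4 u^2 - 1 = ((c + 1) sin alpha)^2 a rational square; by the identity above both u^2 - 1 and
   4 u^2 - 1 are then rational squares. For x = u + sqrt (u^2 - 1) we have x + 1/x = 2 u, so
   x^4 + x^2 + 1 = x^2 (4 u^2 - 1) would be a rational square, which a Fermat-style descent
   on p^4 + p^2 q^2 + q^4 = z^2 rules out. *)

section \<open>The quartic p^4 + p^2 q^2 + q^4 = z^2 and its rational points\<close>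

lemma square_mod_4_int: "(x :: int)^2 mod 4 \<in> {0, 1}"
proof -
  have "x^2 mod 4 = (x mod 4)^2 mod 4" by (simp add: power_mod)
  moreover have "x mod 4 = 0 \<or> x mod 4 = 1 \<or> x mod 4 = 2 \<or> x mod 4 = 3" by presburger
  ultimately show ?thesis by (elim disjE) (simp_all add: power2_eq_square)
qed

lemma square_mod_8_int: "(x :: int)^2 mod 8 \<in> {0, 1, 4}"
proof -
  have "x^2 mod 8 = (x mod 8)^2 mod 8" by (simp add: power_mod)
  moreover have "x mod 8 = 0 \<or> x mod 8 = 1 \<or> x mod 8 = 2 \<or> x mod 8 = 3 \<or>
      x mod 8 = 4 \<or> x mod 8 = 5 \<or> x mod 8 = 6 \<or> x mod 8 = 7" by presburger
  ultimately show ?thesis by (elim disjE) (simp_all add: power2_eq_square)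
qed

lemma odd_square_mod_8_int:
  fixes x :: int assumes "odd x" shows "x^2 mod 8 = 1"
proof -
  have "x^2 mod 8 = (x mod 8)^2 mod 8" by (simp add: power_mod)
  moreover have "x mod 8 = 1 \<or> x mod 8 = 3 \<or> x mod 8 = 5 \<or> x mod 8 = 7"
    using assms by presburger
  ultimately show ?thesis by (elim disjE) (simp_all add: power2_eq_square)
qed

lemma odd_square_plus_square_ne_even_square:
  fixes p x y :: int
  assumes "odd p"
  shows "p^2 + x^2 \<noteq> (2 * y)^2"
proof -
  have "p^2 mod 4 = 1" using odd_square_mod_8_int[OF assms] by presburger
  then have "(p^2 + x^2) mod 4 = (1 + x^2 mod 4) mod 4" by (metis mod_add_eq)
  then have "(p^2 + x^2) mod 4 \<noteq> 0" using square_mod_4_int[of x] by auto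
  moreover have "(2 * y)^2 mod 4 = 0" by (simp add: power_mult_distrib)
  ultimately show ?thesis by metis
qed

lemma quartic_form_odd_odd_not_square:
  fixes p q z :: int
  assumes "odd p" "odd q"
  shows "p^4 + p^2 * q^2 + q^4 \<noteq> z^2"
proof
  assume eq: "p^4 + p^2 * q^2 + q^4 = z^2"
  define P Q where "P = p^2" and "Q = q^2"
  obtain k l where kl: "P = 8 * k + 1" "Q = 8 * l + 1"
    using odd_square_mod_8_int[OF assms(1)] odd_square_mod_8_int[OF assms(2)]
    unfolding P_def Q_def by (metis mod_div_mult_eq add.commute mult.commute)
  have "p^4 + p^2 * q^2 + q^4 = P^2 + P * Q + Q^2" unfolding P_def Q_def by simp
  also have "\<dots> = 8 * (8 * k^2 + 8 * k * l + 8 * l^2 + 3 * k + 3 * l) + 3"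
    unfolding kl by (simp add: power2_eq_square algebra_simps)
  finally obtain X where "z^2 = 8 * X + 3" unfolding eq by blast
  then have "z^2 mod 8 = 3" by simp
  then show False using square_mod_8_int[of z] by simp
qed

lemma coprime_if_no_common_prime_divisor:
  fixes a b :: "'a :: factorial_semiring"
  assumes "a \<noteq> 0" and "\<And>p. prime p \<Longrightarrow> p dvd a \<Longrightarrow> p dvd b \<Longrightarrow> False"
  shows "coprime a b"
proof (rule coprimeI)
  fix c assume c: "c dvd a" "c dvd b"
  show "is_unit c"
  proof (rule ccontr)
    assume "\<not> is_unit c"
    moreover have "c \<noteq> 0" using c(1) assms(1) by auto
    ultimately obtain p where "p dvd c" "prime p" using prime_divisor_exists by blast
    then show False using assms(2) c dvd_trans by metis
  qed
qed

lemma coprime_mult_eq_power_int: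
  fixes a b c :: int
  assumes "a > 0" "b > 0" "coprime a b" "a * b = c ^ n" "n > 0"
  shows "\<exists>s>0. a = s ^ n"
proof -
  have "a * b = \<bar>c\<bar> ^ n" using assms by (metis abs_mult abs_of_pos power_abs mult_pos_pos)
  then have "nat a * nat b = nat \<bar>c\<bar> ^ n"
    using assms by (simp add: nat_mult_distrib[symmetric] nat_power_eq)
  moreover have "coprime (nat a) (nat b)"
    using assms by (simp add: coprime_int_iff[symmetric])
  ultimately have "is_nth_power n (nat a)"
    using assms by (intro is_nth_power_mult_coprime_natD(1)[of "nat a" "nat b"]) auto
  then obtain y where "nat a = y ^ n" by (auto elim: is_nth_powerE)
  then have "a = int y ^ n" using assms(1) by (metis int_nat_eq of_nat_power less_le)
  moreover have "y > 0" using calculation assms(1,5) by (cases "y = 0") (auto simp: power_0_left)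
  ultimately show ?thesis by (intro exI[of _ "int y"]) auto
qed

lemma coprime_factors_of_power_int:
  fixes a b c :: int
  assumes "a > 0" "b > 0" "c > 0" "coprime a b" "a * b = c ^ n" "n > 0"
  obtains s t where "s > 0" "t > 0" "a = s ^ n" "b = t ^ n" "c = s * t"
proof -
  obtain s where s: "s > 0" "a = s ^ n" using coprime_mult_eq_power_int assms by blast
  obtain t where t: "t > 0" "b = t ^ n"
    using coprime_mult_eq_power_int[of b a c n] assms by (auto simp: coprime_commute mult.commute)
  have "(s * t) ^ n = c ^ n" using assms(5) s t by (simp add: power_mult_distrib)
  then have "c = s * t" using s t assms(3,6) by (simp add: power_eq_iff_eq_base)
  with s t show thesis using that by blast
qed

lemma quartic_even_case_factors:
  fixes p w z :: int
  assumes "p > 0" "w > 0" "coprime p (2 * w)" "p^4 + p^2 * (2 * w)^2 + (2 * w)^4 = z^2"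
  obtains P Q where "P > 0" "Q > 0" "coprime P Q" "P * Q = 3 * w^4"
    "P - Q = p^2 + 2 * w^2" "P + Q = \<bar>z\<bar>"
proof -
  define z' where "z' = \<bar>z\<bar>"
  have odd_p: "odd p" and cop: "coprime p w" using assms(3) by auto
  have E: "z'^2 = (p^2 + 2 * w^2)^2 + 12 * w^4"
    unfolding z'_def using assms(4) by (simp add: algebra_simps power2_eq_square power4_eq_xxxx)
  have "odd (z'^2)" using E odd_p by simp
  then have "even (z' + p^2 + 2 * w^2)" using odd_p by simp
  then obtain P where hP: "z' + p^2 + 2 * w^2 = 2 * P" by blast
  define Q where "Q = P - p^2 - 2 * w^2"
  have PpQ: "P + Q = z'" and PmQ: "P - Q = p^2 + 2 * w^2" using hP unfolding Q_def by simp_all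
  have "4 * (P * Q) = (P + Q)^2 - (P - Q)^2" by (simp add: algebra_simps power2_eq_square)
  then have "4 * (P * Q) = z'^2 - (p^2 + 2 * w^2)^2" by (simp only: PpQ PmQ)
  then have PQ: "P * Q = 3 * w^4" using E by simp
  have "p^2 > 0" "z' \<ge> 0" using assms(1) unfolding z'_def by simp_all
  then have P0: "P > 0" using hP zero_le_power2[of w] by linarith
  have "P * Q > 0" using PQ assms(2) by simp
  then have Q0: "Q > 0" using P0 zero_less_mult_pos by blast
  have "coprime P Q"
  proof (rule coprime_if_no_common_prime_divisor)
    fix r :: int assume r: "prime r" "r dvd P" "r dvd Q"
    have "r dvd p^2 + 2 * w^2" using r PmQ by (metis dvd_diff)
    show False
    proof (cases "r dvd w")
      case True
      then have "r dvd 2 * w^2" by (simp add: power2_eq_square)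
      then have "r dvd p^2" using \<open>r dvd p^2 + 2 * w^2\<close> by (simp add: dvd_add_left_iff)
      then show False using True r(1) cop prime_dvd_power not_coprimeI not_prime_unit by metis
    next
      case False
      have "r dvd 3 * w^4" using r(2) PQ by (metis dvd_mult2)
      then have "r dvd 3" using False r(1) by (metis prime_dvd_mult_iff prime_dvd_power)
      then have "r = 3" using r(1) primes_dvd_imp_eq[of r 3] by simp
      then have "3 * 3 dvd 3 * w^4" using r PQ by (metis mult_dvd_mono)
      then have "3 dvd w^4" by (subst (asm) dvd_mult_cancel_left) simp
      then show False using False \<open>r = 3\<close> r(1) prime_dvd_power by blast
    qed
  qed (use P0 in simp)
  with P0 Q0 PQ PmQ PpQ show thesis using that unfolding z'_def by blast
qed

lemma quartic_factors_three_dvd_first_absurd: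
  fixes p w P Q :: int
  assumes "odd p" "w > 0" "P > 0" "Q > 0" "coprime P Q" "P * Q = 3 * w^4"
    and "P - Q = p^2 + 2 * w^2" "3 dvd P"
  shows False
proof -
  obtain P' where P': "P = 3 * P'" using assms(8) by blast
  have "P' > 0" "coprime P' Q" "P' * Q = w^4" using assms(3,5,6) P' by auto
  then obtain m n where mn: "P' = m^4" "Q = n^4" "w = m * n"
    using coprime_factors_of_power_int[OF _ assms(4,2) _ _ zero_less_numeral] by blast
  have "p^2 = 3 * m^4 - n^4 - 2 * (m * n)^2" using assms(7) P' mn by simp
  moreover have "(2 * m^2)^2 - (m^2 + n^2)^2 = 3 * m^4 - n^4 - 2 * (m * n)^2"
    by (simp add: algebra_simps power2_eq_square power4_eq_xxxx)
  ultimately have "p^2 + (m^2 + n^2)^2 = (2 * m^2)^2" by linarith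
  then show False using odd_square_plus_square_ne_even_square[OF assms(1)] by blast
qed

lemma quartic_descent_squares:
  fixes m n p :: int
  assumes "m > 0" "coprime m n" "odd p" "(n^2 + m^2) * (n^2 - 3 * m^2) = p^2"
  obtains s t where "s > 0" "t > 0" "odd s" "odd t" "n^2 + m^2 = s^2" "n^2 - 3 * m^2 = t^2"
proof -
  define A B where "A = n^2 + m^2" and "B = n^2 - 3 * m^2"
  have AB: "A * B = \<bar>p\<bar>^2" unfolding A_def B_def using assms(4) by simp
  have p0: "\<bar>p\<bar> > 0" using assms(3) by auto
  have A0: "A > 0" unfolding A_def using assms(1) by (simp add: add_nonneg_pos)
  have B0: "B > 0" using zero_less_mult_pos[of A B] AB A0 p0 by simp
  have "coprime A B"
  proof (rule coprime_if_no_common_prime_divisor)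
    fix r :: int assume r: "prime r" "r dvd A" "r dvd B"
    have "r dvd p^2" using r(2) AB by (metis dvd_mult2 power2_abs)
    have "odd r"
    proof
      assume "even r"
      then have "even (p^2)" using \<open>r dvd p^2\<close> by (rule dvd_trans)
      then show False using assms(3) by simp
    qed
    have "\<not> r dvd 2^2"
    proof
      assume "r dvd 2^2"
      then have "r dvd 2" using r(1) by (rule prime_dvd_power[rotated])
      then have "r = 2" using r(1) primes_dvd_imp_eq[of r 2] by simp
      then show False using \<open>odd r\<close> by simp
    qed
    then have odd_prime_dvd: "r dvd x" if "r dvd 2^2 * x^2" for x
      using that r(1) prime_dvd_power prime_dvd_mult_iff by blast
    have "r dvd 2^2 * m^2" using dvd_diff[OF r(2,3)] unfolding A_def B_def by (simp add: algebra_simps)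
    then have "r dvd m" by (rule odd_prime_dvd)
    have "r dvd 2^2 * n^2" using dvd_add[OF dvd_mult2[OF r(2), of 3] r(3)]
      unfolding A_def B_def by (simp add: algebra_simps)
    then have "r dvd n" by (rule odd_prime_dvd)
    show False using \<open>r dvd m\<close> \<open>r dvd n\<close> r(1) assms(2) not_coprimeI not_prime_unit by metis
  qed (use A0 in simp)
  then obtain s t where st: "s > 0" "t > 0" "A = s^2" "B = t^2" "\<bar>p\<bar> = s * t"
    using coprime_factors_of_power_int[OF A0 B0 p0 _ AB zero_less_numeral] by blast
  have "odd \<bar>p\<bar>" using assms(3) by simp
  then have "odd (s * t)" using st(5) by simp
  then show thesis using that[of s t] st(1-4) unfolding A_def B_def by simp
qed

lemma quartic_descent_fourth_powers:
  fixes m n s t :: int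
  assumes "m > 0" "coprime m n" "s > 0" "t > 0" "odd s" "odd t"
    and "n^2 + m^2 = s^2" "n^2 - 3 * m^2 = t^2"
  obtains g h where "g > 0" "h > 0" "coprime g h" "g^4 + g^2 * h^2 + h^4 = n^2"
proof -
  have "s^2 - t^2 = 4 * m^2" using assms(7,8) by simp
  moreover have "m^2 > 0" using assms(1) by simp
  ultimately have "t^2 < s^2" by linarith
  then have "t < s" using assms(3,4) by (simp add: power_less_imp_less_base)
  obtain G where G: "s + t = 2 * G" using assms(5,6) by (metis odd_add evenE)
  define H where "H = G - t"
  have sG: "s = G + H" and tG: "t = G - H" using G unfolding H_def by simp_all
  have G0: "G > 0" and H0: "H > 0" using G assms(3,4) \<open>t < s\<close> unfolding H_def by simp_all
  have "4 * (G * H) = s^2 - t^2" unfolding sG tG by (simp add: algebra_simps power2_eq_square)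
  then have GH: "G * H = m^2" using assms(7,8) by simp
  have "coprime G H"
  proof (rule coprime_if_no_common_prime_divisor)
    fix r :: int assume r: "prime r" "r dvd G" "r dvd H"
    have "r dvd m^2" using r(2) GH by (metis dvd_mult2)
    then have "r dvd m" using r(1) prime_dvd_power by blast
    have "r dvd s^2" using r(2,3) unfolding sG power2_eq_square by simp
    then have "r dvd n^2 + m^2" using assms(7) by simp
    then have "r dvd n^2" using \<open>r dvd m^2\<close> by (simp add: dvd_add_left_iff)
    then have "r dvd n" using r(1) prime_dvd_power by blast
    then show False using \<open>r dvd m\<close> r(1) assms(2) not_coprimeI not_prime_unit by metis
  qed (use G0 in simp)
  then obtain g h where gh: "g > 0" "h > 0" "G = g^2" "H = h^2" "m = g * h"
    using coprime_factors_of_power_int[of G H m 2] G0 H0 GH assms(1) by auto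
  have "coprime g h" using \<open>coprime G H\<close> gh by simp
  have "4 * n^2 = 3 * s^2 + t^2" using assms(7,8) by simp
  also have "\<dots> = 4 * (g^4 + g^2 * h^2 + h^4)"
    unfolding sG tG gh by (simp add: algebra_simps power2_eq_square power4_eq_xxxx)
  finally show thesis using that gh \<open>coprime g h\<close> by simp
qed

lemma quartic_descent:
  fixes p q z :: int
  assumes "p > 0" "q > 0" "coprime p q" "even q" "p^4 + p^2 * q^2 + q^4 = z^2"
  obtains g h n where "g > 0" "h > 0" "coprime g h" "n > 0" "n < \<bar>z\<bar>"
    "g^4 + g^2 * h^2 + h^4 = n^2"
proof -
  obtain w where q: "q = 2 * w" using assms(4) by blast
  have w0: "w > 0" using assms(2) q by simp
  have "odd p" using assms(3,4) q by auto
  obtain P Q where PQ: "P > 0" "Q > 0" "coprime P Q" "P * Q = 3 * w^4"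
    "P - Q = p^2 + 2 * w^2" "P + Q = \<bar>z\<bar>"
    using quartic_even_case_factors[of p w z] assms(1,3,5) w0 q by blast
  have "3 dvd P \<or> 3 dvd Q" using PQ(4) prime_dvd_mult_iff[of "3 :: int" P Q] by simp
  then show thesis
  proof
    assume "3 dvd P"
    then show thesis using quartic_factors_three_dvd_first_absurd \<open>odd p\<close> w0 PQ(1-5) by blast
  next
    assume "3 dvd Q"
    then obtain Q' where Q': "Q = 3 * Q'" by blast
    have Q'_facts: "Q' > 0" "coprime P Q'" "P * Q' = w^4" using PQ(2,3,4) Q' by auto
    obtain n m where nm: "n > 0" "m > 0" "P = n^4" "Q' = m^4" "w = n * m"
      using coprime_factors_of_power_int[OF PQ(1) Q'_facts(1) w0 Q'_facts(2,3) zero_less_numeral] by blast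
    then have "coprime m n" using PQ(3) Q' by (simp add: coprime_commute[of m n])
    have "p^2 = n^4 - 3 * m^4 - 2 * (n * m)^2" using PQ(5) Q' nm by simp
    moreover have "(n^2 + m^2) * (n^2 - 3 * m^2) = n^4 - 3 * m^4 - 2 * (n * m)^2"
      by (simp add: algebra_simps power2_eq_square power4_eq_xxxx)
    ultimately have "(n^2 + m^2) * (n^2 - 3 * m^2) = p^2" by simp
    then obtain s t where "s > 0" "t > 0" "odd s" "odd t" "n^2 + m^2 = s^2" "n^2 - 3 * m^2 = t^2"
      using quartic_descent_squares[OF nm(2) \<open>coprime m n\<close> \<open>odd p\<close>] by blast
    then obtain g h where "g > 0" "h > 0" "coprime g h" "g^4 + g^2 * h^2 + h^4 = n^2"
      using quartic_descent_fourth_powers[OF nm(2) \<open>coprime m n\<close>] by blast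
    moreover have "n < \<bar>z\<bar>"
    proof -
      have "n \<le> n^4" using nm(1) by (simp add: self_le_power)
      then show ?thesis using nm(3) PQ(2,6) by linarith
    qed
    ultimately show thesis using that nm(1) by blast
  qed
qed

theorem quartic_form_not_square:
  fixes p q z :: int
  assumes "p > 0" "q > 0" "coprime p q"
  shows "p^4 + p^2 * q^2 + q^4 \<noteq> z^2"
  using assms
proof (induction "nat \<bar>z\<bar>" arbitrary: p q z rule: less_induct)
  case less
  have descent: False
    if hyps: "p > 0" "q > 0" "coprime p q" "even q" "p^4 + p^2 * q^2 + q^4 = z^2" for p q
  proof -
    obtain g h n where "g > 0" "h > 0" "coprime g h" "n > 0" "n < \<bar>z\<bar>"
      "g^4 + g^2 * h^2 + h^4 = n^2"
      using quartic_descent[OF hyps] by blast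
    moreover have "nat \<bar>n\<bar> < nat \<bar>z\<bar>" using calculation(4,5) by simp
    ultimately show False using less.hyps by blast
  qed
  show ?case
  proof
    assume eq: "p^4 + p^2 * q^2 + q^4 = z^2"
    consider "even q" | "even p" | "odd p" "odd q" by blast
    then show False
    proof cases
      case 1
      then show False using descent[of p q] eq less.prems by blast
    next
      case 2
      have "q^4 + q^2 * p^2 + p^4 = z^2" using eq by (simp add: algebra_simps)
      then show False using descent[of q p] 2 less.prems by (simp add: coprime_commute[of q p])
    next
      case 3
      then show False using quartic_form_odd_odd_not_square eq by blast
    qed
  qed
qed

lemma int_square_if_rational_square:
  fixes y :: real and N :: int
  assumes "y \<in> \<rat>" "y^2 = of_int N"
  obtains c :: int where "N = c^2"
proof -
  obtain c d :: int where cd: "d > 0" "coprime c d" "y = of_int c / of_int d"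
    using Rats_cases'[OF assms(1)] by blast
  have "(of_int c)^2 = (of_int N :: real) * (of_int d)^2"
    using assms(2) cd(1,3) by (simp add: power_divide divide_eq_eq)
  then have cN: "c^2 = N * d^2" by (simp flip: of_int_power of_int_mult)
  have "d dvd c^2" using cN by simp
  moreover have "coprime d (c^2)" using cd(2) by (simp add: coprime_commute[of d])
  ultimately have "is_unit d" using coprime_common_divisor[of d "c^2" d] by simp
  then have "d = 1" using cd(1) by simp
  then show thesis using that[of c] cN by simp
qed

lemma quartic_form_not_rational_square:
  fixes x y :: real
  assumes "x \<in> \<rat>" "y \<in> \<rat>" "x > 0"
  shows "x^4 + x^2 + 1 \<noteq> y^2"
proof
  assume eq: "x^4 + x^2 + 1 = y^2"
  obtain a b :: int where ab: "b > 0" "coprime a b" "x = of_int a / of_int b"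
    using Rats_cases'[OF assms(1)] by blast
  have a0: "a > 0" using assms(3) ab by (simp add: zero_less_divide_iff)
  have "(y * of_int b^2)^2 = (x^4 + x^2 + 1) * of_int b^4"
    unfolding eq by (simp add: power_mult_distrib flip: power_mult)
  also have "\<dots> = of_int (a^4 + a^2 * b^2 + b^4)"
    using ab(1) unfolding ab(3) by (simp add: field_simps power2_eq_square power4_eq_xxxx)
  finally obtain c where "a^4 + a^2 * b^2 + b^4 = c^2"
    using int_square_if_rational_square assms(2) by (metis Rats_mult Rats_of_int Rats_power)
  then show False using quartic_form_not_square[OF a0 ab(1,2)] by blast
qed

lemma rational_u2_minus_1_4u2_minus_1_not_both_squares:
  fixes u s w :: real
  assumes "u \<in> \<rat>" "s \<in> \<rat>" "w \<in> \<rat>" "u > 1" "s^2 = u^2 - 1" "w^2 = 4 * u^2 - 1"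
  shows False
proof -
  define x where "x = u + \<bar>s\<bar>"
  have "x \<in> \<rat>" unfolding x_def using assms(1,2) by (simp add: Rats_abs_iff)
  have "x > 0" unfolding x_def using assms(4) by simp
  define y where "y = u - \<bar>s\<bar>"
  have xy: "x * y = 1" unfolding x_def y_def using assms(5)
    by (simp add: algebra_simps power2_eq_square flip: abs_mult)
  have "x^2 * (4 * u^2 - 1) = x^2 * ((x + y)^2 - 1)" unfolding x_def y_def by simp
  also have "\<dots> = x^4 + 2 * x^2 * (x * y) + (x * y)^2 - x^2"
    by (simp add: algebra_simps power2_eq_square power4_eq_xxxx)
  finally have "x^2 * (4 * u^2 - 1) = x^4 + x^2 + 1" unfolding xy by simp
  then have "x^4 + x^2 + 1 = (x * w)^2" using assms(6) by (simp add: power_mult_distrib)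
  then show False
    using quartic_form_not_rational_square \<open>x \<in> \<rat>\<close> \<open>x > 0\<close> assms(3) by (metis Rats_mult)
qed

lemma product_not_rational_square:
  fixes u v :: real
  assumes "u \<in> \<rat>" "v \<in> \<rat>" "u > 1"
    and "(\<exists>s\<in>\<rat>. s^2 = u^2 * (u^2 - 1)) \<or> (\<exists>w\<in>\<rat>. w^2 = 4 * u^2 - 1)"
  shows "v^2 \<noteq> (4 * u^2 - 1) * (u^2 - 1)"
proof
  assume v: "v^2 = (4 * u^2 - 1) * (u^2 - 1)"
  have "u^2 > 1" using assms(3) by (simp add: one_less_power)
  from assms(4) show False
  proof (elim disjE bexE)
    fix s assume s: "s \<in> \<rat>" "s^2 = u^2 * (u^2 - 1)"
    have s': "(s / u)^2 = u^2 - 1" using s(2) assms(3) by (simp add: power_divide)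
    have "(v / (s / u))^2 = v^2 * u^2 / s^2" by (simp add: power_divide power_mult_distrib)
    also have "\<dots> = 4 * u^2 - 1"
      using v s(2) \<open>u^2 > 1\<close> assms(3) by (simp add: less_imp_neq[symmetric])
    finally have "(v / (s / u))^2 = 4 * u^2 - 1" .
    moreover have "s / u \<in> \<rat>" "v / (s / u) \<in> \<rat>" using assms(1,2) s(1) by simp_all
    ultimately show False
      using rational_u2_minus_1_4u2_minus_1_not_both_squares[OF assms(1) _ _ assms(3) s'] by blast
  next
    fix w assume w: "w \<in> \<rat>" "w^2 = 4 * u^2 - 1"
    then have "(v / w)^2 = u^2 - 1"
      using v \<open>u^2 > 1\<close> by (simp add: power_divide)
    then show False using rational_u2_minus_1_4u2_minus_1_not_both_squares
        [OF assms(1) Rats_divide[OF assms(2) w(1)] w(1) assms(3) _ w(2)] by simp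
  qed
qed

lemma cosh_sinh_in_Rats_if_exp_in_Rats:
  fixes x :: real
  assumes "exp x \<in> \<rat>"
  shows "cosh x \<in> \<rat>" "sinh x \<in> \<rat>"
  using assms unfolding cosh_def sinh_def by (simp_all add: exp_minus)

section \<open>The hyperboloid model\<close>

lemma hcollinear_repeated: "hcollinear A A C"
  unfolding hcollinear_def by (intro exI[of _ 1] exI[of _ "-1"] exI[of _ 0]) simp

lemma lor_sym: "lor p q = lor q p"
  unfolding lor_def by (simp add: algebra_simps)

lemma lor_add_right: "lor p (q + r) = lor p q + lor p r"
  and lor_diff_right: "lor p (q - r) = lor p q - lor p r"
  and lor_scaleR_right: "lor p (k *\<^sub>R q) = k * lor p q"
  and lor_add_left: "lor (q + r) p = lor q p + lor r p"
  and lor_diff_left: "lor (q - r) p = lor q p - lor r p"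
  and lor_scaleR_left: "lor (k *\<^sub>R q) p = k * lor q p"
  unfolding lor_def by (simp_all add: algebra_simps)

lemmas lor_linear = lor_add_right lor_diff_right lor_scaleR_right
  lor_add_left lor_diff_left lor_scaleR_left

lemma hpoint_lor_self: "hpoint p \<Longrightarrow> lor p p = 1"
  unfolding hpoint_def by simp

lemma lor_ge_1:
  assumes "hpoint P" "hpoint Q"
  shows "lor P Q \<ge> 1"
proof -
  obtain a b c where P: "P = (a, b, c)" by (cases P) auto
  obtain d e f where Q: "Q = (d, e, f)" by (cases Q) auto
  have ha: "a^2 = 1 + b^2 + c^2" "a > 0" using assms(1) unfolding P hpoint_def lor_def
    by (simp_all add: power2_eq_square)
  have hd: "d^2 = 1 + e^2 + f^2" "d > 0" using assms(2) unfolding Q hpoint_def lor_def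
    by (simp_all add: power2_eq_square)
  have "(a * d)^2 - (1 + b * e + c * f)^2 = (b - e)^2 + (c - f)^2 + (b * f - c * e)^2"
    by (simp add: power_mult_distrib ha(1) hd(1)) (simp add: algebra_simps power2_eq_square)
  then have "(1 + b * e + c * f)^2 \<le> (a * d)^2" by (smt (verit) zero_le_power2)
  then have "1 + b * e + c * f \<le> a * d" using ha(2) hd(2) power2_le_imp_le by fastforce
  then show ?thesis unfolding P Q lor_def by simp
qed

lemma eq_if_lor_eq_1:
  assumes "lor N N = 1" "lor M M = 1" "lor M N = 1"
  shows "M = N"
proof -
  \<comment> \<open>M - N is null and orthogonal to N; Cauchy-Schwarz on the spatial part forces it to vanish\<close>
  define v where "v = M - N"
  have vv: "lor v v = 0" and vN: "lor v N = 0"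
    unfolding v_def using assms by (simp_all add: lor_linear lor_sym[of N M])
  obtain x y z where v: "v = (x, y, z)" by (cases v) auto
  obtain a b c where N: "N = (a, b, c)" by (cases N) auto
  have h1: "a^2 = 1 + b^2 + c^2" using assms(1) unfolding N lor_def by (simp add: power2_eq_square)
  have h2: "x^2 = y^2 + z^2" using vv unfolding v lor_def by (simp add: power2_eq_square)
  have h3: "x * a = y * b + z * c" using vN unfolding v N lor_def by simp
  have "(y^2 + z^2) * (b^2 + c^2) - (y * b + z * c)^2 = (y * c - z * b)^2"
    by (simp add: algebra_simps power2_eq_square)
  then have "(x * a)^2 \<le> x^2 * (b^2 + c^2)" using h2 h3 by (smt (verit) zero_le_power2)
  moreover have "(x * a)^2 = x^2 * (1 + b^2 + c^2)" by (simp add: power_mult_distrib h1)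
  ultimately have "x = 0" by (simp add: algebra_simps)
  then have "v = 0" using h2 v by (simp add: zero_prod_def sum_power2_eq_zero_iff)
  then show ?thesis unfolding v_def by simp
qed

lemma lor_gt_1:
  assumes "hpoint P" "hpoint Q" "P \<noteq> Q"
  shows "lor P Q > 1"
proof -
  have "lor P Q \<noteq> 1" using eq_if_lor_eq_1[of Q P] assms hpoint_lor_self by auto
  then show ?thesis using lor_ge_1[OF assms(1,2)] by simp
qed

lemma lor_eq_cosh_hdist:
  assumes "hpoint P" "hpoint Q"
  shows "lor P Q = cosh (hdist P Q)"
  using lor_ge_1[OF assms] unfolding hdist_def by simp

lemma cosh_hdist_gt_1:
  assumes "hpoint P" "hpoint Q" "P \<noteq> Q"
  shows "cosh (hdist P Q) > 1"
  using lor_gt_1[OF assms] lor_eq_cosh_hdist[OF assms(1,2)] by simp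

lemma hmidpoint_eq:
  assumes "hpoint B" "hpoint C" "hmidpoint B C M"
  shows "M = (1 / (2 * cosh (hdist B C / 2))) *\<^sub>R (B + C)"
proof -
  define u where "u = cosh (hdist B C / 2)"
  have hM: "hpoint M" using assms(3) unfolding hmidpoint_def by simp
  have BM: "lor B M = u" and MC: "lor M C = u"
    using assms hM lor_eq_cosh_hdist unfolding hmidpoint_def u_def by metis+
  have BC: "lor B C = 2 * u^2 - 1"
    using lor_eq_cosh_hdist[OF assms(1,2)] cosh_double_cosh[of "hdist B C / 2"] unfolding u_def by simp
  have u0: "u > 0" unfolding u_def by simp
  define N where "N = (1 / (2 * u)) *\<^sub>R (B + C)"
  have "lor N N = 1" unfolding N_def using u0 assms(1,2) BC
    by (simp add: lor_linear lor_sym[of C B] hpoint_lor_self field_simps power2_eq_square)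
  moreover have "lor M N = 1" unfolding N_def using u0 BM MC
    by (simp add: lor_linear lor_sym[of M B] field_simps)
  ultimately have "M = N" using eq_if_lor_eq_1 hM hpoint_lor_self by blast
  then show ?thesis unfolding N_def u_def .
qed

lemma hangle_eq_arccos:
  assumes "hpoint A" "hpoint B" "hpoint C"
  shows "hangle B A C =
    arccos ((lor A B * lor A C - lor B C) / (sqrt ((lor A B)^2 - 1) * sqrt ((lor A C)^2 - 1)))"
proof -
  have "lor (tangent_towards A B) (tangent_towards A C) = lor B C - lor A B * lor A C"
    "lor (tangent_towards A B) (tangent_towards A B) = 1 - (lor A B)^2"
    "lor (tangent_towards A C) (tangent_towards A C) = 1 - (lor A C)^2"
    using assms unfolding tangent_towards_def
    by (simp_all add: lor_linear lor_sym[of B A] lor_sym[of C A] hpoint_lor_self power2_eq_square)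
  then show ?thesis unfolding hangle_def Let_def by simp
qed

section \<open>Equilateral triangles\<close>

lemma sinh_square_if_cosh_eq:
  fixes l u :: real
  assumes "u > 0" "cosh l = (2 * u^2 - 1) / u"
  shows "(u * sinh l)^2 = (4 * u^2 - 1) * (u^2 - 1)"
proof -
  have "(u * sinh l)^2 = (u * cosh l)^2 - u^2" by (simp add: cosh_square_eq algebra_simps)
  also have "u * cosh l = 2 * u^2 - 1" using assms by simp
  finally show ?thesis by (simp add: algebra_simps power2_eq_square)
qed

lemma equilateral_median_cosh:
  assumes "hpoint A" "hpoint B" "hpoint C"
    and "hdist A B = a" "hdist B C = a" "hdist C A = a" "hmidpoint B C M"
  shows "cosh (hdist A M) = cosh a / cosh (a / 2)"
proof -
  have "hpoint M" using assms(7) unfolding hmidpoint_def by simp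
  have "lor A B = cosh a" "lor A C = cosh a"
    using assms(1-6) lor_eq_cosh_hdist lor_sym[of A C] by metis+
  moreover have "M = (1 / (2 * cosh (a / 2))) *\<^sub>R (B + C)"
    using hmidpoint_eq[OF assms(2,3,7)] assms(5) by simp
  ultimately have "lor A M = cosh a / cosh (a / 2)" by (simp add: lor_linear)
  then show ?thesis using lor_eq_cosh_hdist[OF assms(1) \<open>hpoint M\<close>] by simp
qed

lemma equilateral_cos_hangle:
  assumes "hpoint A" "hpoint B" "hpoint C" "A \<noteq> B"
    and "hdist A B = a" "hdist B C = a" "hdist C A = a"
  shows "cos (hangle B A C) = cosh a / (cosh a + 1)"
proof -
  define c where "c = cosh a"
  have lors: "lor A B = c" "lor A C = c" "lor B C = c"
    using assms(1-3,5-7) lor_eq_cosh_hdist lor_sym[of A C] unfolding c_def by metis+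
  have "c > 1" using cosh_hdist_gt_1[OF assms(1,2,4)] assms(5) unfolding c_def by simp
  then have "c^2 - 1 > 0" by (simp add: one_less_power)
  then have "(c * c - c) / (sqrt (c^2 - 1) * sqrt (c^2 - 1)) = (c * (c - 1)) / ((c - 1) * (c + 1))"
    by (simp add: algebra_simps power2_eq_square)
  also have "\<dots> = c / (c + 1)" using \<open>c > 1\<close> by simp
  finally have "hangle B A C = arccos (c / (c + 1))"
    unfolding hangle_eq_arccos[OF assms(1-3)] lors by simp
  moreover have "-1 \<le> c / (c + 1)" using \<open>c > 1\<close> by (simp add: le_divide_eq)
  moreover have "c / (c + 1) \<le> 1" using \<open>c > 1\<close> by simp
  ultimately show ?thesis using cos_arccos unfolding c_def by presburger
qed

lemma equilateral_rational_hangle: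
  assumes "hpoint A" "hpoint B" "hpoint C" "A \<noteq> B"
    and "hdist A B = a" "hdist B C = a" "hdist C A = a"
    and "cos (hangle B A C) \<in> \<rat>" "sin (hangle B A C) \<in> \<rat>"
  shows "cosh a \<in> \<rat>" "((cosh a + 1) * sin (hangle B A C))^2 = 2 * cosh a + 1"
proof -
  define c \<alpha> where "c = cosh a" and "\<alpha> = hangle B A C"
  have "c > 1" using cosh_hdist_gt_1[OF assms(1,2,4)] assms(5) unfolding c_def by simp
  have cos: "cos \<alpha> = c / (c + 1)"
    using equilateral_cos_hangle[OF assms(1-7)] unfolding c_def \<alpha>_def .
  then have "1 - cos \<alpha> = 1 / (c + 1)" using \<open>c > 1\<close> by (simp add: field_simps)
  then have "c = cos \<alpha> / (1 - cos \<alpha>)" using cos \<open>c > 1\<close> by simp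
  then show "cosh a \<in> \<rat>" using assms(8) unfolding c_def \<alpha>_def by simp
  have "((c + 1) * sin \<alpha>)^2 = (c + 1)^2 * (1 - cos \<alpha>^2)"
    by (simp add: power_mult_distrib sin_squared_eq)
  also have "\<dots> = (c + 1)^2 - ((c + 1) * cos \<alpha>)^2"
    by (simp add: power_mult_distrib right_diff_distrib)
  also have "(c + 1) * cos \<alpha> = c" using cos \<open>c > 1\<close> by simp
  finally show "((cosh a + 1) * sin (hangle B A C))^2 = 2 * cosh a + 1"
    unfolding c_def \<alpha>_def by (simp add: power2_eq_square algebra_simps)
qed

lemma equilateral_rationality_hypothesis:
  assumes "hpoint A" "hpoint B" "hpoint C" "A \<noteq> B"
    and "hdist A B = a" "hdist B C = a" "hdist C A = a"
    and "exp a \<in> \<rat> \<or> (Re (cis (hangle B A C)) \<in> \<rat> \<and> Im (cis (hangle B A C)) \<in> \<rat>)"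
  shows "cosh a \<in> \<rat> \<and>
    ((\<exists>s\<in>\<rat>. s^2 = cosh (a / 2)^2 * (cosh (a / 2)^2 - 1)) \<or>
     (\<exists>w\<in>\<rat>. w^2 = 4 * cosh (a / 2)^2 - 1))"
proof -
  define c u where "c = cosh a" and "u = cosh (a / 2)"
  have cu: "c = 2 * u^2 - 1" unfolding c_def u_def using cosh_double_cosh[of "a / 2"] by simp
  have "c \<in> \<rat> \<and> ((\<exists>s\<in>\<rat>. s^2 = u^2 * (u^2 - 1)) \<or> (\<exists>w\<in>\<rat>. w^2 = 4 * u^2 - 1))"
    using assms(8)
  proof
    assume "exp a \<in> \<rat>"
    then have "c \<in> \<rat>" "sinh a / 2 \<in> \<rat>" unfolding c_def by (simp_all add: cosh_sinh_in_Rats_if_exp_in_Rats)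
    moreover have "(sinh a / 2)^2 = u^2 * (u^2 - 1)"
      using cosh_square_eq[of a] cu unfolding c_def by (simp add: power_divide algebra_simps power2_eq_square)
    ultimately show ?thesis by blast
  next
    assume "Re (cis (hangle B A C)) \<in> \<rat> \<and> Im (cis (hangle B A C)) \<in> \<rat>"
    then have cs: "cos (hangle B A C) \<in> \<rat>" "sin (hangle B A C) \<in> \<rat>" by simp_all
    note hangle = equilateral_rational_hangle[OF assms(1-7) cs]
    have "c \<in> \<rat>" using hangle(1) unfolding c_def .
    moreover have "((c + 1) * sin (hangle B A C))^2 = 4 * u^2 - 1"
      using hangle(2) cu unfolding c_def by simp
    moreover have "(c + 1) * sin (hangle B A C) \<in> \<rat>" using \<open>c \<in> \<rat>\<close> cs(2) by simp
    ultimately show ?thesis by blast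
  qed
  then show ?thesis unfolding c_def u_def .
qed

theorem proposition4p2:
  fixes A B C M :: pt and a \<alpha> :: real
  assumes "hpoint A" "hpoint B" "hpoint C"
    and "\<not> hcollinear A B C"
    and "hdist A B = a" "hdist B C = a" "hdist C A = a"
    and "\<alpha> = hangle B A C"
    and "exp a \<in> \<rat> \<or> (Re (cis \<alpha>) \<in> \<rat> \<and> Im (cis \<alpha>) \<in> \<rat>)"
    and "hmidpoint B C M"
  shows "exp (hdist A M) \<notin> \<rat>"
proof
  define l c u where "l = hdist A M" and "c = cosh a" and "u = cosh (a / 2)"
  assume "exp (hdist A M) \<in> \<rat>"
  then have "cosh l \<in> \<rat>" "sinh l \<in> \<rat>"
    unfolding l_def by (simp_all add: cosh_sinh_in_Rats_if_exp_in_Rats)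
  have "A \<noteq> B" using assms(4) hcollinear_repeated by blast
  then have "c > 1" using cosh_hdist_gt_1[OF assms(1,2)] assms(5) unfolding c_def by simp
  have cu: "c = 2 * u^2 - 1" unfolding c_def u_def using cosh_double_cosh[of "a / 2"] by simp
  then have "1^2 < u^2" using \<open>c > 1\<close> by simp
  then have "u > 1" using power_less_imp_less_base cosh_real_nonneg unfolding u_def by blast
  have median: "cosh l = c / u"
    using equilateral_median_cosh[OF assms(1-3,5-7,10)] unfolding l_def c_def u_def .
  then have product: "(u * sinh l)^2 = (4 * u^2 - 1) * (u^2 - 1)"
    using \<open>u > 1\<close> cu by (simp add: sinh_square_if_cosh_eq)
  have rat: "c \<in> \<rat> \<and> ((\<exists>s\<in>\<rat>. s^2 = u^2 * (u^2 - 1)) \<or> (\<exists>w\<in>\<rat>. w^2 = 4 * u^2 - 1))"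
    using equilateral_rationality_hypothesis[OF assms(1-3) \<open>A \<noteq> B\<close> assms(5-7)] assms(8,9)
    unfolding c_def u_def by blast
  have "u = c / cosh l" using median \<open>u > 1\<close> \<open>c > 1\<close> by simp
  then have "u \<in> \<rat>" using rat \<open>cosh l \<in> \<rat>\<close> by simp
  then show False
    using product_not_rational_square[OF _ _ \<open>u > 1\<close>] rat product \<open>sinh l \<in> \<rat>\<close> by simp
qed

end
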